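(* Let $L>0$, $\mathbb{T}=[0,L]$ with periodic boundary conditions, $N\ge1$, $D_i>0$, $h_{ij}\in\mathbb{R}$, and $K:\mathbb{T}\to\mathbb{R}$, $K\ge0$, a zero-mean probability density that is twice differentiable with $K'\in L^\infty(\mathbb{T})$. Let $u_0\in C^2(\mathbb{T})^N$ with $u_0(x)>0$ for all $x\in\mathbb{T}$, and let $u$ be the unique solution of \[ \partial_tu_i=D_i\partial_x^2u_i-\partial_x\Big[u_i\,\partial_x\sum_{j=1}^Nh_{ij}(K\ast u_j)\Big],\quad i=1,\dots,N,\qquad u(\cdot,0)=u_0, \] which satisfies $u\in C^1((0,T_* ),L^2(\mathbb{T}))^N\cap C^0([0,T_* ),C^2(\mathbb{T}))^N$, where $T_*=\infty$ if $\|u(t)\|_{L^1}$ is bounded for all time and otherwise $T_*$ is the earliest time at which $\|u(t)\|_{L^1}=2\|u_0\|_{L^1}$. Then $T_*=\infty$, i.e. the solution is global in time.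
   Context: $(K\ast f)(x)=\int_0^LK(x-y)f(y)\,dy$ with periodic extension; for vector-valued $g$, $\|g\|_{L^1}=\sum_i\|g_i\|_{L^1}$. *)

theory Defs
  imports "HOL-Analysis.Analysis"
begin

text \<open>Periodic convolution on the torus [0,L]: (K * f)(x) = int_0^L K(x-y) f(y) dy,
  where K is given as an L-periodic function on the real line.\<close>
definition conv_per :: "real \<Rightarrow> (real \<Rightarrow> real) \<Rightarrow> (real \<Rightarrow> real) \<Rightarrow> real \<Rightarrow> real" where
  "conv_per L K f x = integral {0..L} (\<lambda>y. K (x - y) * f y)"

definition L1vec :: "nat \<Rightarrow> real \<Rightarrow> (nat \<Rightarrow> real \<Rightarrow> real) \<Rightarrow> real" where
  "L1vec N L g = (\<Sum>i<N. integral {0..L} (\<lambda>x. \<bar>g i x\<bar>))"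

definition rhs :: "nat \<Rightarrow> real \<Rightarrow> (nat \<Rightarrow> real) \<Rightarrow> (nat \<Rightarrow> nat \<Rightarrow> real) \<Rightarrow> (real \<Rightarrow> real)
    \<Rightarrow> (nat \<Rightarrow> real \<Rightarrow> real) \<Rightarrow> nat \<Rightarrow> real \<Rightarrow> real" where
  "rhs N L D h K v i x =
     D i * deriv (deriv (v i)) x
     - deriv (\<lambda>y. v i y * deriv (\<lambda>z. \<Sum>j<N. h i j * conv_per L K (v j) z) y) x"

end

theory Submission
  imports Defs
begin

text \<open>Each mass int u_i is conserved: the right-hand side of the i-th equation is the
  x-derivative of the periodic flux D_i u_i' - u_i W_i', where W_i = sum_j h_ij (K * u_j), so its
  integral over a period vanishes. Each u_i also stays nonnegative, by a minimum principle for the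
  nondivergence form u_t = D_i u'' - W_i' u' - W_i'' u, in which W_i'' is bounded on compact time
  intervals. Hence ||u(t)||_1 = ||u_0||_1 > 0 for every t < T_*, so the L^1 norm never reaches
  2 ||u_0||_1 and T_* is infinite.\<close>

lemma periodic_shift_int:
  fixes f :: "real \<Rightarrow> 'a"
  assumes per: "\<forall>x. f (x + L) = f x"
  shows "f (x + of_int n * L) = f x"
proof -
  have "\<forall>x. f (x + of_int n * L) = f x"
  proof (induction n rule: int_induct[where k = 0])
    case (step1 i)
    show ?case
    proof
      fix x
      have "f (x + of_int (i + 1) * L) = f ((x + L) + of_int i * L)" by (simp add: algebra_simps)
      also have "\<dots> = f x" using step1(2) per by simp
      finally show "f (x + of_int (i + 1) * L) = f x" .
    qed
  next
    case (step2 i)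
    show ?case
    proof
      fix x
      have "f (x + of_int (i - 1) * L) = f (x + of_int (i - 1) * L + L)" using per by simp
      also have "\<dots> = f x" using step2(2) by (simp add: algebra_simps)
      finally show "f (x + of_int (i - 1) * L) = f x" .
    qed
  qed simp
  then show ?thesis by blast
qed

lemma periodic_value_in_period:
  fixes f :: "real \<Rightarrow> 'a"
  assumes "L > 0" and "\<forall>x. f (x + L) = f x"
  obtains y where "y \<in> {0..L}" and "f x = f y"
proof
  define n where "n = \<lfloor>x / L\<rfloor>"
  have "of_int n \<le> x / L" "x / L < of_int n + 1" unfolding n_def by linarith+
  with \<open>L > 0\<close> show "x - of_int n * L \<in> {0..L}" by (simp add: field_simps)
  show "f x = f (x - of_int n * L)"
    using periodic_shift_int[OF assms(2), of "x - of_int n * L" n] by simp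
qed

lemma periodic_derivative:
  assumes "\<forall>x. f (x + L) = f x" and "\<And>x. (f has_real_derivative f' x) (at x)"
  shows "f' (x + L) = f' x"
proof -
  have "((\<lambda>x. x + L) has_real_derivative 1) (at x)" by (auto intro!: derivative_eq_intros)
  from DERIV_chain2[OF assms(2) this]
  have "((\<lambda>x. f (x + L)) has_real_derivative f' (x + L)) (at x)" by simp
  moreover have "(\<lambda>x. f (x + L)) = f" using assms(1) by auto
  ultimately show ?thesis using assms(2) DERIV_unique by metis
qed

lemma global_min_second_derivative_nonneg:
  fixes f f' :: "real \<Rightarrow> real"
  assumes f': "\<And>x. (f has_real_derivative f' x) (at x)"
    and f'': "(f' has_real_derivative f'') (at x0)"
    and min: "\<And>x. f x0 \<le> f x"
  shows "f' x0 = 0" and "f'' \<ge> 0"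
proof -
  show "f' x0 = 0" using DERIV_local_min[OF f', of 1] min by auto
  show "f'' \<ge> 0"
  proof (rule ccontr)
    assume "\<not> f'' \<ge> 0"
    then obtain e where e: "e > 0" "\<And>h. 0 < h \<Longrightarrow> h < e \<Longrightarrow> f' (x0 + h) < f' x0"
      using DERIV_neg_dec_right[OF f''] by force
    obtain z where z: "x0 < z" "z < x0 + e/2" "f (x0 + e/2) - f x0 = (x0 + e/2 - x0) * f' z"
      using MVT2[of x0 "x0 + e/2" f f'] f' e by auto
    have "f' z < 0" using e(2)[of "z - x0"] z \<open>f' x0 = 0\<close> by simp
    then have "(x0 + e/2 - x0) * f' z < 0" using e(1) by (simp add: mult_pos_neg)
    then have "f (x0 + e/2) < f x0" using z(3) by linarith
    with min show False by (meson not_le)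
  qed
qed

section \<open>Periodic convolution and the interaction potential\<close>

lemma continuous_on_slice:
  assumes "continuous_on (S \<times> T) (\<lambda>(s, x). f s x)" and "s \<in> S"
  shows "continuous_on T (f s)"
proof -
  have "continuous_on T ((\<lambda>(s, x). f s x) \<circ> Pair s)"
    by (rule continuous_on_compose[OF _ continuous_on_subset[OF assms(1)]])
      (use assms(2) in \<open>auto intro!: continuous_intros\<close>)
  then show ?thesis by (simp add: comp_def)
qed

lemma conv_per_periodic:
  assumes "\<forall>x. K (x + L) = K x"
  shows "conv_per L K f (x + L) = conv_per L K f x"
proof -
  have "K (x + L - y) = K (x - y)" for y using assms by (metis add_diff_eq diff_add_eq)
  then show ?thesis unfolding conv_per_def by simp
qed

lemma continuous_on_reflect_shift:
  fixes K :: "real \<Rightarrow> real"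
  assumes "continuous_on UNIV K"
  shows "continuous_on A (\<lambda>y. K (x - y))"
  by (rule continuous_on_compose2[OF assms]) (auto intro!: continuous_intros)

text \<open>Integration by parts over one period moves the derivative from the kernel onto f;
  the boundary terms cancel by periodicity.\<close>
lemma has_real_derivative_conv_per:
  fixes K K' f f' :: "real \<Rightarrow> real"
  assumes "L \<ge> 0"
    and K': "\<And>x. (K has_real_derivative K' x) (at x)" and K'_cont: "continuous_on UNIV K'"
    and K_per: "\<forall>x. K (x + L) = K x"
    and f': "\<And>x. (f has_real_derivative f' x) (at x)" and f'_cont: "continuous_on UNIV f'"
    and f_per: "\<forall>x. f (x + L) = f x"
  shows "(conv_per L K f has_real_derivative conv_per L K f' x) (at x)"
proof -
  have cK: "continuous_on UNIV K" and cf: "continuous_on UNIV f"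
    using K' f' by (auto intro!: continuous_at_imp_continuous_on DERIV_isCont)
  have K'_chain: "((\<lambda>y. K (g y)) has_real_derivative D) (at y within s)"
    if "(g has_real_derivative g') (at y within s)" and "D = K' (g y) * g'" for g g' D y s
    using DERIV_chain2[OF K' that(1)] that(2) by simp
  have leibniz: "((\<lambda>x. integral (cbox 0 L) (\<lambda>y. K (x - y) * f y)) has_field_derivative
      integral (cbox 0 L) (\<lambda>y. K' (x - y) * f y)) (at x within UNIV)"
  proof (rule leibniz_rule_field_derivative)
    fix x y :: real
    show "((\<lambda>x. K (x - y) * f y) has_field_derivative K' (x - y) * f y) (at x within UNIV)"
      by (auto intro!: derivative_eq_intros K'_chain)
  next
    show "(\<lambda>y. K (x - y) * f y) integrable_on cbox 0 L" for x
      using cf cK by (intro integrable_continuous continuous_intros continuous_on_reflect_shift)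
        (auto intro: continuous_on_subset)
    show "continuous_on (UNIV \<times> cbox 0 L) (\<lambda>(x, y). K' (x - y) * f y)"
      unfolding split_beta'
      by (intro continuous_intros continuous_on_compose2[OF K'_cont] continuous_on_compose2[OF cf]) auto
  qed auto
  have by_parts: "((\<lambda>y. K (x - y) * f' y - K' (x - y) * f y) has_integral
      K (x - L) * f L - K (x - 0) * f 0) {0..L}"
  proof (rule fundamental_theorem_of_calculus[OF \<open>L \<ge> 0\<close>])
    fix y
    have "((\<lambda>y. K (x - y) * f y) has_real_derivative K (x - y) * f' y - K' (x - y) * f y) (at y)"
      using f' by (auto intro!: derivative_eq_intros K'_chain)
    then show "((\<lambda>y. K (x - y) * f y) has_vector_derivative K (x - y) * f' y - K' (x - y) * f y)
        (at y within {0..L})"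
      by (simp add: has_real_derivative_iff_has_vector_derivative has_vector_derivative_at_within)
  qed
  have "K (x - L) * f L - K (x - 0) * f 0 = 0"
    using K_per[rule_format, of "x - L"] f_per[rule_format, of 0] by simp
  moreover have "(\<lambda>y. K' (x - y) * f y) integrable_on {0..L}" "(\<lambda>y. K (x - y) * f' y) integrable_on {0..L}"
    using K'_cont f'_cont cf cK
    by (intro integrable_continuous_interval continuous_intros continuous_on_reflect_shift;
        auto intro: continuous_on_subset)+
  ultimately have "integral {0..L} (\<lambda>y. K' (x - y) * f y) = conv_per L K f' x"
    using integral_unique[OF by_parts] integral_diff unfolding conv_per_def by fastforce
  with leibniz show ?thesis unfolding conv_per_def[abs_def] cbox_interval by simp
qed

lemma continuous_on_conv_per_param:
  fixes K :: "real \<Rightarrow> real" and g :: "'a::topological_space \<Rightarrow> real \<Rightarrow> real"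
  assumes "continuous_on UNIV K" and "continuous_on (S \<times> {0..L}) (\<lambda>(s, y). g s y)"
  shows "continuous_on (S \<times> A) (\<lambda>(s, x). conv_per L K (g s) x)"
proof -
  have "continuous_on ((S \<times> A) \<times> {0..L}) (\<lambda>q. g (fst (fst q)) (snd q))"
    by (intro continuous_on_compose2[OF assms(2), of _ "\<lambda>q. (fst (fst q), snd q)", simplified])
      (auto intro!: continuous_intros)
  then have "continuous_on ((S \<times> A) \<times> cbox 0 L) (\<lambda>(p, y). K (snd p - y) * g (fst p) y)"
    unfolding split_beta' cbox_interval
    by (intro continuous_intros continuous_on_compose2[OF assms(1)]) auto
  from integral_continuous_on_param[OF this]
  show ?thesis unfolding conv_per_def cbox_interval split_beta' by simp
qed

definition periodic_C2 :: "real \<Rightarrow> (real \<Rightarrow> real) \<Rightarrow> bool" where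
  "periodic_C2 L f \<longleftrightarrow> (\<forall>x. f (x + L) = f x)
     \<and> (\<forall>x. f differentiable (at x) \<and> deriv f differentiable (at x))
     \<and> continuous_on UNIV (deriv (deriv f))"

lemma periodic_C2D:
  assumes "periodic_C2 L f"
  shows "f (x + L) = f x" and "(f has_real_derivative deriv f x) (at x)"
    and "(deriv f has_real_derivative deriv (deriv f) x) (at x)"
    and "deriv f (x + L) = deriv f x"
    and "continuous_on UNIV (deriv f)" and "continuous_on UNIV (deriv (deriv f))"
proof -
  show f: "f (x + L) = f x" for x using assms unfolding periodic_C2_def by blast
  show f': "(f has_real_derivative deriv f x) (at x)" for x
    using assms unfolding periodic_C2_def DERIV_deriv_iff_real_differentiable by blast
  show "(deriv f has_real_derivative deriv (deriv f) x) (at x)" for x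
    using assms unfolding periodic_C2_def DERIV_deriv_iff_real_differentiable by blast
  then show "continuous_on UNIV (deriv f)"
    by (intro continuous_at_imp_continuous_on ballI DERIV_isCont)
  show "deriv f (x + L) = deriv f x" using periodic_derivative f f' by blast
  show "continuous_on UNIV (deriv (deriv f))" using assms unfolding periodic_C2_def by blast
qed

definition interaction_potential :: "nat \<Rightarrow> real \<Rightarrow> (nat \<Rightarrow> nat \<Rightarrow> real) \<Rightarrow> (real \<Rightarrow> real)
    \<Rightarrow> (nat \<Rightarrow> real \<Rightarrow> real) \<Rightarrow> nat \<Rightarrow> real \<Rightarrow> real" where
  "interaction_potential N L h K v i z = (\<Sum>j<N. h i j * conv_per L K (v j) z)"

lemma interaction_potential_periodic:
  assumes "\<forall>x. K (x + L) = K x"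
  shows "interaction_potential N L h K v i (x + L) = interaction_potential N L h K v i x"
  unfolding interaction_potential_def using conv_per_periodic[OF assms] by simp

lemma has_real_derivative_interaction_potential:
  fixes K K' :: "real \<Rightarrow> real"
  assumes "L \<ge> 0" and K': "\<And>x. (K has_real_derivative K' x) (at x)" "continuous_on UNIV K'"
    and K_per: "\<forall>x. K (x + L) = K x"
    and v': "\<And>j x. j < N \<Longrightarrow> (v j has_real_derivative v' j x) (at x)"
    and "\<And>j. j < N \<Longrightarrow> continuous_on UNIV (v' j)"
    and "\<And>j x. j < N \<Longrightarrow> v j (x + L) = v j x"
  shows "(interaction_potential N L h K v i has_real_derivative
            interaction_potential N L h K v' i x) (at x)"
  unfolding interaction_potential_def[abs_def]
  using assms by (intro DERIV_sum DERIV_cmult has_real_derivative_conv_per) simp_all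

lemma continuous_on_interaction_potential_param:
  assumes "continuous_on UNIV K"
    and "\<And>j. j < N \<Longrightarrow> continuous_on (S \<times> {0..L}) (\<lambda>(s, y). w s j y)"
  shows "continuous_on (S \<times> A) (\<lambda>(s, x). interaction_potential N L h K (w s) i x)"
  unfolding interaction_potential_def split_beta'
  using continuous_on_conv_per_param[OF assms(1) assms(2), of _ A, unfolded split_beta']
  by (intro continuous_intros) auto

lemma rhs_eq_potential:
  "rhs N L D h K v i x = D i * deriv (deriv (v i)) x
     - deriv (\<lambda>y. v i y * deriv (interaction_potential N L h K v i) y) x"
  by (simp add: rhs_def interaction_potential_def[abs_def])

context
  fixes N :: nat and L :: real and D :: "nat \<Rightarrow> real" and h :: "nat \<Rightarrow> nat \<Rightarrow> real"
    and K K' :: "real \<Rightarrow> real" and v :: "nat \<Rightarrow> real \<Rightarrow> real" and i :: nat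
  assumes L: "L \<ge> 0" and K': "\<And>x. (K has_real_derivative K' x) (at x)" "continuous_on UNIV K'"
    and K_per: "\<forall>x. K (x + L) = K x"
    and v: "\<And>j. j < N \<Longrightarrow> periodic_C2 L (v j)" and i: "i < N"
begin

private abbreviation "W1 \<equiv> interaction_potential N L h K (\<lambda>j. deriv (v j)) i"
private abbreviation "W2 \<equiv> interaction_potential N L h K (\<lambda>j. deriv (deriv (v j))) i"

private lemma has_real_derivative_potential:
  "(interaction_potential N L h K v i has_real_derivative W1 x) (at x)"
  by (rule has_real_derivative_interaction_potential[OF L K' K_per]) (simp_all add: periodic_C2D(1,2,5)[OF v])

private lemma has_real_derivative_potential_deriv:
  "(W1 has_real_derivative W2 x) (at x)"
  by (rule has_real_derivative_interaction_potential[OF L K' K_per]) (simp_all add: periodic_C2D(3,4,6)[OF v])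

lemma rhs_eq_expanded:
  "rhs N L D h K v i x = D i * deriv (deriv (v i)) x - (deriv (v i) x * W1 x + v i x * W2 x)"
proof -
  have "deriv (interaction_potential N L h K v i) = W1"
    using has_real_derivative_potential DERIV_imp_deriv by blast
  then have "((\<lambda>y. v i y * deriv (interaction_potential N L h K v i) y) has_real_derivative
      deriv (v i) x * W1 x + v i x * W2 x) (at x)"
    using periodic_C2D(2)[OF v[OF i]] has_real_derivative_potential_deriv
    by (auto intro!: derivative_eq_intros)
  then show ?thesis unfolding rhs_eq_potential by (simp add: DERIV_imp_deriv)
qed

lemma rhs_flux_has_derivative:
  "((\<lambda>y. D i * deriv (v i) y - v i y * W1 y) has_real_derivative rhs N L D h K v i x) (at x)"
  unfolding rhs_eq_expanded using periodic_C2D(2,3)[OF v[OF i]] has_real_derivative_potential_deriv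
  by (auto intro!: derivative_eq_intros)

lemma integral_rhs_eq_0: "integral {0..L} (rhs N L D h K v i) = 0"
proof -
  let ?flux = "\<lambda>y. D i * deriv (v i) y - v i y * W1 y"
  have "(rhs N L D h K v i has_integral ?flux L - ?flux 0) {0..L}"
    using rhs_flux_has_derivative
    by (intro fundamental_theorem_of_calculus[OF L])
      (simp add: has_real_derivative_iff_has_vector_derivative[symmetric] has_field_derivative_at_within)
  moreover have "?flux L = ?flux 0"
    using periodic_C2D(1,4)[OF v[OF i], of 0] interaction_potential_periodic[OF K_per, of N h _ i 0]
    by simp
  ultimately show ?thesis by (simp add: integral_unique)
qed

end

section \<open>Conservation in time and a minimum principle\<close>

lemma integral_constant_in_time:
  fixes w g :: "real \<Rightarrow> real \<Rightarrow> real"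
  assumes "0 \<le> t"
    and w_cont: "continuous_on ({0..t} \<times> {a..b}) (\<lambda>(s, x). w s x)"
    and w_deriv: "\<And>s x. 0 < s \<Longrightarrow> s < t \<Longrightarrow> ((\<lambda>s. w s x) has_real_derivative g s x) (at s)"
    and g_cont: "continuous_on ({0<..<t} \<times> {a..b}) (\<lambda>(s, x). g s x)"
    and g_int: "\<And>s. 0 < s \<Longrightarrow> s < t \<Longrightarrow> integral {a..b} (g s) = 0"
  shows "integral {a..b} (w t) = integral {a..b} (w 0)"
proof (cases "t = 0")
  case False
  let ?M = "\<lambda>s. integral {a..b} (w s)"
  have "continuous_on {0..t} ?M"
    using integral_continuous_on_param[of "{0..t}" a b w] w_cont by (simp add: cbox_interval)
  moreover have "(?M has_real_derivative 0) (at s)" if s: "0 < s" "s < t" for s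
  proof -
    have "(?M has_real_derivative integral {a..b} (g s)) (at s within {0<..<t})"
      unfolding cbox_interval[symmetric]
    proof (rule leibniz_rule_field_derivative)
      fix r assume "r \<in> {0<..<t}"
      then show "w r integrable_on cbox a b"
        using continuous_on_slice[OF w_cont, of r] by (simp add: integrable_continuous_interval)
    qed (use s w_deriv g_cont in \<open>auto intro: has_field_derivative_at_within simp: cbox_interval\<close>)
    then show ?thesis using s g_int at_within_open[of s "{0<..<t}"] by simp
  qed
  ultimately show ?thesis using DERIV_isconst2[of 0 t ?M t] False \<open>0 \<le> t\<close> by simp
qed simp

lemma first_zero_time:
  fixes z :: "real \<Rightarrow> real \<Rightarrow> real"
  assumes cont: "continuous_on ({0..T} \<times> {a..b}) (\<lambda>(t, x). z t x)"
    and init: "\<And>x. x \<in> {a..b} \<Longrightarrow> z 0 x > 0"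
    and "s \<in> {0..T}" "y \<in> {a..b}" "z s y \<le> 0"
  obtains t0 x0 where "0 < t0" "t0 \<le> T" "x0 \<in> {a..b}" "z t0 x0 = 0"
    and "\<And>x. x \<in> {a..b} \<Longrightarrow> z t0 x \<ge> 0"
    and "\<And>r x. 0 \<le> r \<Longrightarrow> r < t0 \<Longrightarrow> x \<in> {a..b} \<Longrightarrow> z r x > 0"
proof -
  define P where "P = {p \<in> {0..T} \<times> {a..b}. z (fst p) (snd p) \<le> 0}"
  define S where "S = fst ` P"
  have "closed P" unfolding P_def
    using cont by (intro continuous_on_closed_Collect_le closed_Times) (auto simp: split_beta')
  moreover have "{0..T} \<times> {a..b} \<inter> P = P" unfolding P_def by blast
  ultimately have "compact P"
    using compact_Int_closed[OF compact_Times[OF compact_Icc compact_Icc]] by metis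
  then have "compact S" unfolding S_def by (intro compact_continuous_image continuous_intros)
  have "s \<in> S" using assms(3-5) unfolding S_def P_def by force
  moreover have "bdd_below S" unfolding S_def P_def by (rule bdd_belowI[of _ 0]) auto
  ultimately have "Inf S \<in> S" and Inf_le: "\<And>r. r \<in> S \<Longrightarrow> Inf S \<le> r"
    using closed_contains_Inf compact_imp_closed[OF \<open>compact S\<close>] cInf_lower by blast+
  define t0 where "t0 = Inf S"
  obtain x0 where t0: "t0 \<in> {0..T}" and x0: "x0 \<in> {a..b}" "z t0 x0 \<le> 0"
    using \<open>Inf S \<in> S\<close> unfolding t0_def S_def P_def by auto
  have before: "z r x > 0" if "0 \<le> r" "r < t0" "x \<in> {a..b}" for r x
  proof (rule ccontr)
    assume "\<not> z r x > 0"
    then have "r \<in> S" using that t0 unfolding S_def P_def by force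
    with Inf_le that(2) show False unfolding t0_def by force
  qed
  have "t0 \<noteq> 0" using init[OF x0(1)] x0(2) by auto
  with t0 have "0 < t0" by simp
  have at_t0: "z t0 x \<ge> 0" if "x \<in> {a..b}" for x
  proof -
    have "continuous_on {0..t0} (\<lambda>r. z r x)"
      using t0 that
      by (intro continuous_on_compose2[OF cont, of _ "\<lambda>r. (r, x)", simplified]) (auto intro!: continuous_intros)
    then show ?thesis
      using continuous_ge_on_closure[of "{0..<t0}" "\<lambda>r. z r x" t0 0] \<open>0 < t0\<close> before that
      by (simp add: less_imp_le)
  qed
  show ?thesis
    using that[OF \<open>0 < t0\<close> _ x0(1)] t0 x0 at_t0[OF x0(1)] at_t0 before by fastforce
qed

context
  fixes L d T :: real and v v' v'' b c :: "real \<Rightarrow> real \<Rightarrow> real"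
  assumes L: "L > 0" and d: "d \<ge> 0"
    and v_per: "\<And>s x. s \<in> {0..T} \<Longrightarrow> v s (x + L) = v s x"
    and v_cont: "continuous_on ({0..T} \<times> {0..L}) (\<lambda>(s, x). v s x)"
    and v': "\<And>s x. s \<in> {0..T} \<Longrightarrow> (v s has_real_derivative v' s x) (at x)"
    and v'': "\<And>s x. s \<in> {0..T} \<Longrightarrow> (v' s has_real_derivative v'' s x) (at x)"
    and v_t: "\<And>s x. 0 < s \<Longrightarrow> s \<le> T \<Longrightarrow>
      ((\<lambda>r. v r x) has_real_derivative d * v'' s x - b s x * v' s x - c s x * v s x) (at s)"
    and v_init: "\<And>x. v 0 x \<ge> 0"
begin

text \<open>At a first zero (t0, x0) of z = v + \<epsilon> e^((C+1)t), which is also a spatial minimum,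
  the equation gives z_t > 0, contradicting z > 0 just before t0.\<close>
lemma periodic_min_principle_perturbed:
  assumes c_lower: "\<And>s x. s \<in> {0..T} \<Longrightarrow> x \<in> {0..L} \<Longrightarrow> c s x \<ge> - C"
    and "\<epsilon> > 0" and "s \<in> {0..T}" and "y \<in> {0..L}"
  shows "v s y + \<epsilon> * exp ((C + 1) * s) > 0"
proof (rule ccontr)
  define z where "z s x = v s x + \<epsilon> * exp ((C + 1) * s)" for s x
  assume "\<not> ?thesis"
  then have "z s y \<le> 0" by (simp add: z_def)
  moreover have "continuous_on ({0..T} \<times> {0..L}) (\<lambda>(s, x). z s x)"
    using v_cont unfolding z_def split_beta' by (intro continuous_intros)
  moreover have "z 0 x > 0" for x using v_init[of x] \<open>\<epsilon> > 0\<close> by (simp add: z_def add_nonneg_pos)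
  ultimately obtain t0 x0 where t0: "0 < t0" "t0 \<le> T" and x0: "x0 \<in> {0..L}" "z t0 x0 = 0"
    and z_t0: "\<And>x. x \<in> {0..L} \<Longrightarrow> z t0 x \<ge> 0"
    and before: "\<And>r x. 0 \<le> r \<Longrightarrow> r < t0 \<Longrightarrow> x \<in> {0..L} \<Longrightarrow> z r x > 0"
    using first_zero_time[of T 0 L z s y] assms(3,4) by blast
  have t0_in: "t0 \<in> {0..T}" using t0 by simp
  have "z t0 x0 \<le> z t0 x" for x
  proof -
    have "\<forall>x. v t0 (x + L) = v t0 x" using v_per[OF t0_in] by blast
    then obtain y' where "y' \<in> {0..L}" "v t0 x = v t0 y'" using periodic_value_in_period[OF L] by blast
    then show ?thesis using z_t0 x0(2) unfolding z_def by fastforce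
  qed
  moreover have "(z t0 has_real_derivative v' t0 x) (at x)" for x
    unfolding z_def using v'[OF t0_in] by (auto intro!: derivative_eq_intros)
  ultimately have v'_x0: "v' t0 x0 = 0" and v''_x0: "v'' t0 x0 \<ge> 0"
    using global_min_second_derivative_nonneg[OF _ v''[OF t0_in]] by blast+
  define e where "e = \<epsilon> * exp ((C + 1) * t0)"
  have "e > 0" using \<open>\<epsilon> > 0\<close> by (simp add: e_def)
  have v_x0: "v t0 x0 = - e" using x0(2) unfolding z_def e_def by linarith
  have "((\<lambda>r. z r x0) has_real_derivative
      d * v'' t0 x0 - b t0 x0 * v' t0 x0 - c t0 x0 * v t0 x0 + e * (C + 1)) (at t0)"
    unfolding z_def e_def using v_t[OF t0] by (auto intro!: derivative_eq_intros)
  moreover have "d * v'' t0 x0 - b t0 x0 * v' t0 x0 - c t0 x0 * v t0 x0 + e * (C + 1)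
      = d * v'' t0 x0 + e * (c t0 x0 + C + 1)"
    by (simp add: v_x0 v'_x0 algebra_simps)
  moreover have "d * v'' t0 x0 + e * (c t0 x0 + C + 1) > 0"
    using c_lower[OF t0_in x0(1)] d v''_x0 \<open>e > 0\<close> by (simp add: add_nonneg_pos)
  ultimately obtain \<delta> where "\<delta> > 0" and decr: "\<And>h. 0 < h \<Longrightarrow> h < \<delta> \<Longrightarrow> z (t0 - h) x0 < z t0 x0"
    using DERIV_pos_inc_left by (metis (no_types, lifting))
  define h where "h = min (\<delta> / 2) t0"
  have "z (t0 - h) x0 < 0" using decr[of h] x0(2) \<open>\<delta> > 0\<close> t0 by (simp add: h_def)
  moreover have "z (t0 - h) x0 > 0" using before[of "t0 - h" x0] x0(1) \<open>\<delta> > 0\<close> t0 by (simp add: h_def)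
  ultimately show False by simp
qed

lemma periodic_min_principle:
  assumes c_cont: "continuous_on ({0..T} \<times> {0..L}) (\<lambda>(s, x). c s x)" and s: "s \<in> {0..T}"
  shows "v s x \<ge> 0"
proof -
  obtain C where C: "\<And>s x. s \<in> {0..T} \<Longrightarrow> x \<in> {0..L} \<Longrightarrow> c s x \<ge> - C"
  proof -
    have "bounded ((\<lambda>(s, x). c s x) ` ({0..T} \<times> {0..L}))"
      by (intro compact_imp_bounded compact_continuous_image c_cont compact_Times compact_Icc)
    then obtain B where "\<And>p. p \<in> {0..T} \<times> {0..L} \<Longrightarrow> \<bar>(\<lambda>(s, x). c s x) p\<bar> \<le> B"
      unfolding bounded_iff by auto
    then show ?thesis using that[of B] by fastforce
  qed
  have "\<forall>x. v s (x + L) = v s x" using v_per[OF s] by blast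
  then obtain y where y: "y \<in> {0..L}" "v s x = v s y" using periodic_value_in_period[OF L] by blast
  have "v s y \<ge> 0"
  proof (rule ccontr)
    assume "\<not> v s y \<ge> 0"
    define \<epsilon> where "\<epsilon> = - v s y / (2 * exp ((C + 1) * s))"
    have "\<epsilon> > 0" using \<open>\<not> v s y \<ge> 0\<close> by (simp add: \<epsilon>_def divide_neg_pos)
    from periodic_min_principle_perturbed[OF C this s y(1)] \<open>\<not> v s y \<ge> 0\<close>
    show False by (simp add: \<epsilon>_def)
  qed
  with y show ?thesis by simp
qed

end

section \<open>Solutions of the system\<close>

locale nonlocal_system_solution =
  fixes N :: nat and L :: real and D :: "nat \<Rightarrow> real" and h :: "nat \<Rightarrow> nat \<Rightarrow> real"
    and K :: "real \<Rightarrow> real" and u :: "nat \<Rightarrow> real \<Rightarrow> real \<Rightarrow> real" and Tstar :: ereal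
  assumes L_pos: "L > 0" and D_nonneg: "\<And>i. i < N \<Longrightarrow> D i \<ge> 0"
    and K_per: "\<forall>x. K (x + L) = K x"
    and K_diff: "\<And>x. K differentiable (at x) \<and> deriv K differentiable (at x)"
    and u_per: "\<And>i t x. i < N \<Longrightarrow> 0 \<le> t \<Longrightarrow> ereal t < Tstar \<Longrightarrow> u i t (x + L) = u i t x"
    and u_diff: "\<And>i t x. i < N \<Longrightarrow> 0 \<le> t \<Longrightarrow> ereal t < Tstar \<Longrightarrow>
      u i t differentiable (at x) \<and> deriv (u i t) differentiable (at x)"
    and u_cont: "\<And>i. i < N \<Longrightarrow>
      continuous_on ({t. 0 \<le> t \<and> ereal t < Tstar} \<times> UNIV) (\<lambda>(t, x). u i t x)"
    and u''_cont: "\<And>i. i < N \<Longrightarrow>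
      continuous_on ({t. 0 \<le> t \<and> ereal t < Tstar} \<times> UNIV) (\<lambda>(t, x). deriv (deriv (u i t)) x)"
    and u_pde: "\<And>i t x. i < N \<Longrightarrow> 0 < t \<Longrightarrow> ereal t < Tstar \<Longrightarrow>
      ((\<lambda>s. u i s x) has_real_derivative rhs N L D h K (\<lambda>j. u j t) i x) (at t)"
    and rhs_cont: "\<And>i. i < N \<Longrightarrow>
      continuous_on ({t. 0 < t \<and> ereal t < Tstar} \<times> UNIV) (\<lambda>(t, x). rhs N L D h K (\<lambda>j. u j t) i x)"
    and u_init_nonneg: "\<And>i x. i < N \<Longrightarrow> u i 0 x \<ge> 0"
begin

lemma K_has_derivative: "(K has_real_derivative deriv K x) (at x)"
  using K_diff by (simp add: DERIV_deriv_iff_real_differentiable)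

lemma continuous_deriv_K: "continuous_on UNIV (deriv K)"
  using K_diff by (intro continuous_at_imp_continuous_on ballI differentiable_imp_continuous_within) blast

lemma ereal_less_Tstar: "s \<le> t \<Longrightarrow> ereal t < Tstar \<Longrightarrow> ereal s < Tstar"
  using order.strict_trans1[of "ereal s" "ereal t" Tstar] by simp

lemma continuous_on_restrict_time:
  assumes "continuous_on ({t. P t \<and> ereal t < Tstar} \<times> UNIV) f" and "ereal t < Tstar"
    and "\<And>s. s \<in> S \<Longrightarrow> P s \<and> s \<le> t"
  shows "continuous_on (S \<times> A) f"
  by (rule continuous_on_subset[OF assms(1)]) (use assms(3) ereal_less_Tstar[OF _ assms(2)] in force)

lemma periodic_C2_state:
  assumes "i < N" "s \<in> {0..t}" "ereal t < Tstar"
  shows "periodic_C2 L (u i s)"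
proof -
  have "0 \<le> s" "ereal s < Tstar" using assms(2,3) ereal_less_Tstar by auto
  moreover from this have "continuous_on UNIV (deriv (deriv (u i s)))"
    using continuous_on_slice[OF u''_cont[OF assms(1)], of s] by simp
  ultimately show ?thesis unfolding periodic_C2_def using u_per u_diff assms(1) by simp
qed

lemma u_nonneg:
  assumes i: "i < N" and "0 \<le> t" "ereal t < Tstar"
  shows "u i t x \<ge> 0"
proof (rule periodic_min_principle[where v = "u i" and v' = "\<lambda>s. deriv (u i s)"
      and v'' = "\<lambda>s. deriv (deriv (u i s))" and d = "D i" and T = t
      and b = "\<lambda>s. interaction_potential N L h K (\<lambda>j. deriv (u j s)) i"
      and c = "\<lambda>s. interaction_potential N L h K (\<lambda>j. deriv (deriv (u j s))) i"])
  fix s x assume s: "0 < s" "s \<le> t"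
  then have "ereal s < Tstar" using ereal_less_Tstar \<open>ereal t < Tstar\<close> by blast
  have "periodic_C2 L (u j s)" if "j < N" for j
    using periodic_C2_state[OF that _ \<open>ereal t < Tstar\<close>] s by simp
  then show "((\<lambda>r. u i r x) has_real_derivative
      D i * deriv (deriv (u i s)) x - interaction_potential N L h K (\<lambda>j. deriv (u j s)) i x * deriv (u i s) x
      - interaction_potential N L h K (\<lambda>j. deriv (deriv (u j s))) i x * u i s x) (at s)"
    using u_pde[OF i s(1) \<open>ereal s < Tstar\<close>] L_pos
      rhs_eq_expanded[OF _ K_has_derivative continuous_deriv_K K_per _ i]
    by (simp add: algebra_simps)
next
  show "continuous_on ({0..t} \<times> {0..L})
      (\<lambda>(s, x). interaction_potential N L h K (\<lambda>j. deriv (deriv (u j s))) i x)"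
    using K_has_derivative
    by (intro continuous_on_interaction_potential_param continuous_on_restrict_time[OF u''_cont])
      (auto intro!: continuous_at_imp_continuous_on DERIV_isCont simp: \<open>ereal t < Tstar\<close>)
next
  show "continuous_on ({0..t} \<times> {0..L}) (\<lambda>(s, x). u i s x)"
    by (rule continuous_on_restrict_time[OF u_cont[OF i] \<open>ereal t < Tstar\<close>]) simp
qed (use L_pos D_nonneg u_init_nonneg \<open>0 \<le> t\<close> i
      periodic_C2D[OF periodic_C2_state[OF i _ \<open>ereal t < Tstar\<close>]] in auto)

lemma mass_conserved:
  assumes i: "i < N" and "0 \<le> t" "ereal t < Tstar"
  shows "integral {0..L} (u i t) = integral {0..L} (u i 0)"
proof (rule integral_constant_in_time)
  show "continuous_on ({0..t} \<times> {0..L}) (\<lambda>(s, x). u i s x)"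
    by (rule continuous_on_restrict_time[OF u_cont[OF i] \<open>ereal t < Tstar\<close>]) simp
  show "continuous_on ({0<..<t} \<times> {0..L}) (\<lambda>(s, x). rhs N L D h K (\<lambda>j. u j s) i x)"
    by (rule continuous_on_restrict_time[OF rhs_cont[OF i] \<open>ereal t < Tstar\<close>]) simp
  fix s assume "0 < s" "s < t"
  then have "ereal s < Tstar" using ereal_less_Tstar[of s t] \<open>ereal t < Tstar\<close> by simp
  with \<open>0 < s\<close> show "((\<lambda>s. u i s x) has_real_derivative rhs N L D h K (\<lambda>j. u j s) i x) (at s)" for x
    using u_pde[OF i] by blast
  show "integral {0..L} (rhs N L D h K (\<lambda>j. u j s) i) = 0"
    using L_pos periodic_C2_state[of _ s s] \<open>0 < s\<close> \<open>ereal s < Tstar\<close>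
    by (intro integral_rhs_eq_0[OF _ K_has_derivative continuous_deriv_K K_per _ i]) auto
qed fact

lemma L1vec_conserved:
  assumes "0 \<le> t" "ereal t < Tstar"
  shows "L1vec N L (\<lambda>j. u j t) = L1vec N L (\<lambda>j. u j 0)"
  unfolding L1vec_def
proof (rule sum.cong)
  fix i assume "i \<in> {..<N}"
  then have "i < N" by simp
  have "integral {0..L} (\<lambda>x. \<bar>u i s x\<bar>) = integral {0..L} (u i s)" if "0 \<le> s" "ereal s < Tstar" for s
    using u_nonneg[OF \<open>i < N\<close> that] by (simp cong: integral_cong)
  moreover have "ereal 0 < Tstar" using assms ereal_less_Tstar by blast
  ultimately show "integral {0..L} (\<lambda>x. \<bar>u i t x\<bar>) = integral {0..L} (\<lambda>x. \<bar>u i 0 x\<bar>)"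
    using mass_conserved[OF \<open>i < N\<close> assms] assms by simp
qed simp

end

lemma escape_time_infinite:
  fixes F :: "real \<Rightarrow> real" and Tstar :: ereal
  assumes "Tstar > 0" and const: "\<And>t. 0 \<le> t \<Longrightarrow> ereal t < Tstar \<Longrightarrow> F t = A"
    and escape: "Tstar \<noteq> \<infinity> \<longrightarrow> (\<forall>t. 0 \<le> t \<and> ereal t < Tstar \<longrightarrow> F t < 2 * A)
      \<and> (F \<longlongrightarrow> 2 * A) (at_left (real_of_ereal Tstar))"
  shows "Tstar = \<infinity>"
proof (rule ccontr)
  assume "Tstar \<noteq> \<infinity>"
  then obtain R where R: "Tstar = ereal R" using \<open>Tstar > 0\<close> by (cases Tstar) auto
  with \<open>Tstar > 0\<close> have "R > 0" by (simp add: zero_ereal_def)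
  have "A < 2 * A" using escape \<open>Tstar \<noteq> \<infinity>\<close> const[of 0] \<open>Tstar > 0\<close> by (auto simp: zero_ereal_def)
  have "eventually (\<lambda>t. F t = A) (at_left R)"
    using eventually_at_left_real[OF \<open>R > 0\<close>] by eventually_elim (auto simp: R const)
  then have "(F \<longlongrightarrow> A) (at_left R)" by (rule tendsto_eventually)
  moreover have "(F \<longlongrightarrow> 2 * A) (at_left R)" using escape \<open>Tstar \<noteq> \<infinity>\<close> R by simp
  ultimately have "A = 2 * A" using tendsto_unique[OF trivial_limit_at_left_real] by blast
  with \<open>A < 2 * A\<close> show False by simp
qed

theorem theorem3p10:
  fixes L :: real and N :: nat and D :: "nat \<Rightarrow> real" and h :: "nat \<Rightarrow> nat \<Rightarrow> real"
    and K :: "real \<Rightarrow> real" and u0 :: "nat \<Rightarrow> real \<Rightarrow> real"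
    and u :: "nat \<Rightarrow> real \<Rightarrow> real \<Rightarrow> real" and Tstar :: ereal
  assumes L_pos: "L > 0"
    and N_pos: "N \<ge> 1"
    and D_pos: "\<forall>i<N. D i > 0"
    \<comment> \<open>kernel: L-periodic, nonnegative, probability density with zero mean,
        twice differentiable, K' bounded\<close>
    and K_per: "\<forall>x. K (x + L) = K x"
    and K_nonneg: "\<forall>x. K x \<ge> 0"
    and K_int: "K integrable_on {0..L}"
    and K_mass: "integral {0..L} K = 1"
    and K_mean: "integral {-L/2..L/2} (\<lambda>x. x * K x) = 0"
    and K_diff: "\<forall>x. K differentiable (at x) \<and> deriv K differentiable (at x)"
    and K'_bdd: "bounded (range (deriv K))"
    \<comment> \<open>initial datum: L-periodic, C^2, strictly positive\<close>
    and u0_per: "\<forall>i<N. \<forall>x. u0 i (x + L) = u0 i x"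
    and u0_C2: "\<forall>i<N. (\<forall>x. u0 i differentiable (at x) \<and> deriv (u0 i) differentiable (at x))
                      \<and> continuous_on UNIV (deriv (deriv (u0 i)))"
    and u0_pos: "\<forall>i<N. \<forall>x. u0 i x > 0"
    \<comment> \<open>u solves the system on [0, T_*)\<close>
    and T_pos: "Tstar > 0"
    and u_init: "\<forall>i<N. u i 0 = u0 i"
    and u_per: "\<forall>i<N. \<forall>t. 0 \<le> t \<and> ereal t < Tstar \<longrightarrow> (\<forall>x. u i t (x + L) = u i t x)"
    and u_C2: "\<forall>i<N. \<forall>t. 0 \<le> t \<and> ereal t < Tstar \<longrightarrow>
                 (\<forall>x. u i t differentiable (at x) \<and> deriv (u i t) differentiable (at x))"
    and u_cont: "\<forall>i<N.
         continuous_on ({t. 0 \<le> t \<and> ereal t < Tstar} \<times> UNIV) (\<lambda>(t, x). u i t x)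
       \<and> continuous_on ({t. 0 \<le> t \<and> ereal t < Tstar} \<times> UNIV) (\<lambda>(t, x). deriv (u i t) x)
       \<and> continuous_on ({t. 0 \<le> t \<and> ereal t < Tstar} \<times> UNIV) (\<lambda>(t, x). deriv (deriv (u i t)) x)"
    and u_pde: "\<forall>i<N. \<forall>t x. 0 < t \<and> ereal t < Tstar \<longrightarrow>
         ((\<lambda>s. u i s x) has_real_derivative rhs N L D h K (\<lambda>j. u j t) i x) (at t)"
    and u_dt_cont: "\<forall>i<N.
         continuous_on ({t. 0 < t \<and> ereal t < Tstar} \<times> UNIV) (\<lambda>(t, x). rhs N L D h K (\<lambda>j. u j t) i x)"
    \<comment> \<open>definition of T_*: if finite, the earliest time at which the L^1 norm reaches 2||u0||\<close>
    and Tstar_def: "Tstar \<noteq> \<infinity> \<longrightarrow>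
         (\<forall>t. 0 \<le> t \<and> ereal t < Tstar \<longrightarrow> L1vec N L (\<lambda>j. u j t) < 2 * L1vec N L u0)
       \<and> ((\<lambda>t. L1vec N L (\<lambda>j. u j t)) \<longlongrightarrow> 2 * L1vec N L u0) (at_left (real_of_ereal Tstar))"
  shows "Tstar = \<infinity> \<and> (\<exists>B. \<forall>t\<ge>0. L1vec N L (\<lambda>j. u j t) \<le> B)"
proof -
  interpret nonlocal_system_solution N L D h K u Tstar
    using L_pos D_pos K_per K_diff u_per u_C2 u_cont u_pde u_dt_cont u_init u0_pos
    by unfold_locales (auto intro: less_imp_le)
  have "L1vec N L (\<lambda>j. u j t) = L1vec N L u0" if "0 \<le> t" "ereal t < Tstar" for t
    using L1vec_conserved[OF that] u_init by (simp add: L1vec_def)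
  moreover from this have "Tstar = \<infinity>" by (rule escape_time_infinite[OF T_pos _ Tstar_def])
  ultimately show ?thesis by auto
qed

end
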